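(* Let $\mathbf P=\mathbf u\mathbf v^{\mathsf T}\in\mathbb R^{\mathsf M\times\mathsf N}$ with $\mathbf u\in\mathbb R^{\mathsf M}$, $\mathbf v\in\mathbb R^{\mathsf N}$, and let $j_{\max}\in\arg\max_{j}\mathbf v_j$, $j_{\min}\in\arg\min_j\mathbf v_j$. Let $x,y\in[\mathsf M]$ be users with $\mathbf u_x\ge0$ and $\mathbf u_y<0$. Let $\Delta>0$, let $S_x,S_y\subseteq[\mathsf N]$ with $j_{\max}\in S_x$ and $j_{\min}\in S_y$, and let $\widetilde{\mathbf P}\in\mathbb R^{\mathsf M\times\mathsf N}$ satisfy $|\widetilde{\mathbf P}_{xj}-\mathbf P_{xj}|\le\Delta/2$ for all $j\in S_x$ and $|\widetilde{\mathbf P}_{yj}-\mathbf P_{yj}|\le\Delta/2$ for all $j\in S_y$. Define $T_x=\{j\in S_x:\widetilde{\mathbf P}_{xj}+\Delta>\max_{t\in S_x}\widetilde{\mathbf P}_{xt}\}$ and $T_y=\{j\in S_y:\widetilde{\mathbf P}_{yj}+\Delta>\max_{t\in S_y}\widetilde{\mathbf P}_{yt}\}$. If $T_x\cap T_y\neq\emptyset$, then $\max_{t\in[\mathsf N]}\mathbf P_{xt}-\min_{t\in[\mathsf N]}\mathbf P_{xt}\le4\Delta$ or $\max_{t\in[\mathsf N]}\mathbf P_{yt}-\min_{t\in[\mathsf N]}\mathbf P_{yt}\le4\Delta$. *)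

theory Defs
  imports Main "HOL-Analysis.Analysis"
begin

text \<open>Matrices are represented as functions nat => nat => real, with row index in {..<M}
  and column index in {..<N}. The rank-one matrix u v^T:\<close>

definition outer :: "(nat \<Rightarrow> real) \<Rightarrow> (nat \<Rightarrow> real) \<Rightarrow> nat \<Rightarrow> nat \<Rightarrow> real" where
  "outer u v = (\<lambda>i j. u i * v j)"

end

theory Submission
  imports Defs
begin

text \<open>Let \<open>j\<close> be a common element of \<open>T\<^sub>x\<close> and \<open>T\<^sub>y\<close>. Since the estimates are
  \<open>\<Delta>/2\<close>-accurate, \<open>j\<close> is a \<open>2\<Delta>\<close>-near maximiser of the true row \<open>x\<close> and of the true
  row \<open>y\<close>. Row \<open>x\<close> is \<open>u\<^sub>x v\<close> with \<open>u\<^sub>x \<ge> 0\<close> and row \<open>y\<close> is \<open>u\<^sub>y v\<close> with \<open>u\<^sub>y < 0\<close>, so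
  this says \<open>u\<^sub>x (v\<^sub>m\<^sub>a\<^sub>x - v\<^sub>j) < 2\<Delta>\<close> and \<open>|u\<^sub>y| (v\<^sub>j - v\<^sub>m\<^sub>i\<^sub>n) < 2\<Delta>\<close>. Adding, the smaller
  of \<open>u\<^sub>x\<close>, \<open>|u\<^sub>y|\<close> times the spread \<open>v\<^sub>m\<^sub>a\<^sub>x - v\<^sub>m\<^sub>i\<^sub>n\<close> of \<open>v\<close> is below \<open>4\<Delta>\<close>; and the
  spread of a row of \<open>u v\<^sup>T\<close> is \<open>|u\<^sub>i|\<close> times the spread of \<open>v\<close>.\<close>

lemma Max_Min_image_scale_le:
  fixes f :: "'a \<Rightarrow> real"
  assumes "finite A" "A \<noteq> {}"
  shows "Max ((\<lambda>t. c * f t) ` A) - Min ((\<lambda>t. c * f t) ` A) \<le> \<bar>c\<bar> * (Max (f ` A) - Min (f ` A))"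
proof -
  have "Max ((\<lambda>t. c * f t) ` A) \<in> (\<lambda>t. c * f t) ` A"
    "Min ((\<lambda>t. c * f t) ` A) \<in> (\<lambda>t. c * f t) ` A"
    using assms by (auto intro: Max_in Min_in)
  then obtain s t where s: "s \<in> A" "Max ((\<lambda>t. c * f t) ` A) = c * f s"
    and t: "t \<in> A" "Min ((\<lambda>t. c * f t) ` A) = c * f t"
    by blast
  have "f s \<le> Max (f ` A)" "f t \<le> Max (f ` A)" "Min (f ` A) \<le> f s" "Min (f ` A) \<le> f t"
    using s(1) t(1) assms(1) by simp_all
  then have spread: "\<bar>f s - f t\<bar> \<le> Max (f ` A) - Min (f ` A)"
    by linarith
  have "c * (f s - f t) \<le> \<bar>c\<bar> * \<bar>f s - f t\<bar>"
    using abs_ge_self[of "c * (f s - f t)"] by (simp add: abs_mult)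
  also have "\<dots> \<le> \<bar>c\<bar> * (Max (f ` A) - Min (f ` A))"
    using spread by (rule mult_left_mono) simp
  finally have "c * (f s - f t) \<le> \<bar>c\<bar> * (Max (f ` A) - Min (f ` A))" .
  with s t show ?thesis by (simp add: right_diff_distrib)
qed

lemma noisy_near_argmax_gap:
  fixes e f :: "'a \<Rightarrow> real"
  assumes "finite S" "j \<in> S" "k \<in> S"
    and accurate: "\<forall>i\<in>S. \<bar>e i - f i\<bar> \<le> \<delta>"
    and near_max: "e j + \<Delta> > Max (e ` S)"
  shows "f k - f j < \<Delta> + 2 * \<delta>"
proof -
  have "e k \<le> Max (e ` S)" using assms by simp
  moreover have "\<bar>e j - f j\<bar> \<le> \<delta>" "\<bar>e k - f k\<bar> \<le> \<delta>" using accurate assms by auto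
  ultimately show ?thesis using near_max by (simp add: abs_le_iff)
qed

lemma min_weight_spread_lt:
  fixes a b lo mid hi :: real
  assumes "a \<ge> 0" "b \<ge> 0" "lo \<le> mid" "mid \<le> hi"
    and "a * (hi - mid) < 2 * \<Delta>" "b * (mid - lo) < 2 * \<Delta>"
  shows "a * (hi - lo) \<le> 4 * \<Delta> \<or> b * (hi - lo) \<le> 4 * \<Delta>"
proof (cases "a \<le> b")
  case True
  then have "a * (mid - lo) \<le> b * (mid - lo)" using assms by (intro mult_right_mono) auto
  with assms have "a * (hi - lo) \<le> 4 * \<Delta>" by (simp add: algebra_simps)
  then show ?thesis ..
next
  case False
  then have "b * (hi - mid) \<le> a * (hi - mid)" using assms by (intro mult_right_mono) auto
  with assms have "b * (hi - lo) \<le> 4 * \<Delta>" by (simp add: algebra_simps)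
  then show ?thesis ..
qed

theorem mainTheorem7:
  fixes M N :: nat
    and u v :: "nat \<Rightarrow> real"
    and P Pt :: "nat \<Rightarrow> nat \<Rightarrow> real"
    and jmax jmin x y :: nat
    and \<Delta> :: real
    and Sx Sy Tx Ty :: "nat set"
  assumes P_def: "P = outer u v"
    and jmax: "jmax < N" "v jmax = Max (v ` {..<N})"
    and jmin: "jmin < N" "v jmin = Min (v ` {..<N})"
    and xy: "x < M" "y < M" "u x \<ge> 0" "u y < 0"
    and Delta: "\<Delta> > 0"
    and Sx: "Sx \<subseteq> {..<N}" "jmax \<in> Sx"
    and Sy: "Sy \<subseteq> {..<N}" "jmin \<in> Sy"
    and estx: "\<forall>j\<in>Sx. \<bar>Pt x j - P x j\<bar> \<le> \<Delta> / 2"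
    and esty: "\<forall>j\<in>Sy. \<bar>Pt y j - P y j\<bar> \<le> \<Delta> / 2"
    and Tx_def: "Tx = {j \<in> Sx. Pt x j + \<Delta> > Max ((\<lambda>t. Pt x t) ` Sx)}"
    and Ty_def: "Ty = {j \<in> Sy. Pt y j + \<Delta> > Max ((\<lambda>t. Pt y t) ` Sy)}"
    and inter: "Tx \<inter> Ty \<noteq> {}"
  shows "Max ((\<lambda>t. P x t) ` {..<N}) - Min ((\<lambda>t. P x t) ` {..<N}) \<le> 4 * \<Delta>
       \<or> Max ((\<lambda>t. P y t) ` {..<N}) - Min ((\<lambda>t. P y t) ` {..<N}) \<le> 4 * \<Delta>"
proof -
  have P_eq: "P i = (\<lambda>t. u i * v t)" for i by (simp add: P_def outer_def)
  obtain j where jx: "j \<in> Tx" and jy: "j \<in> Ty" using inter by blast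
  have "finite Sx" "finite Sy" using Sx Sy finite_subset by blast+
  then have "u x * v jmax - u x * v j < \<Delta> + 2 * (\<Delta> / 2)"
    and "u y * v jmin - u y * v j < \<Delta> + 2 * (\<Delta> / 2)"
    using noisy_near_argmax_gap[of Sx j jmax "Pt x" "P x" "\<Delta> / 2" \<Delta>]
      noisy_near_argmax_gap[of Sy j jmin "Pt y" "P y" "\<Delta> / 2" \<Delta>]
      jx jy Tx_def Ty_def Sx Sy estx esty P_eq by auto
  moreover have "v jmin \<le> v j" "v j \<le> v jmax"
    using jx Tx_def Sx jmax jmin by auto
  ultimately have weighted_spread: "u x * (v jmax - v jmin) \<le> 4 * \<Delta> \<or> - u y * (v jmax - v jmin) \<le> 4 * \<Delta>"
    using xy by (intro min_weight_spread_lt[of _ _ _ "v j"]) (auto simp: algebra_simps)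
  have row_spread: "Max (P i ` {..<N}) - Min (P i ` {..<N}) \<le> \<bar>u i\<bar> * (v jmax - v jmin)" for i
    using Max_Min_image_scale_le[of "{..<N}" "u i" v] jmax jmin by (auto simp: P_eq)
  show ?thesis
    using weighted_spread row_spread[of x] row_spread[of y] xy by (auto simp: abs_of_nonneg abs_of_neg)
qed

end
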